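(* Let $L\subset M$ be Noetherian $R_2$-modules such that $M/L\cong R_2/\mathfrak{p}$ for a prime ideal $\mathfrak{p}\subset R_2$, let $\Lambda\in\mathcal{L}_2$, and assume $M/\mathfrak{b}_\Lambda M$ is finite. Then there is an ideal $\mathfrak{a}\subset R_2$ with $\mathfrak{b}_\Lambda\mathfrak{p}\subset\mathfrak{a}\subset\mathfrak{b}_\Lambda\cap\mathfrak{p}$ such that \[|M/\mathfrak{b}_\Lambda M|=\left|\frac{R_2/\mathfrak{p}}{\mathfrak{b}_\Lambda(R_2/\mathfrak{p})}\right|\cdot\frac{|L/\mathfrak{b}_\Lambda L|}{|(\mathfrak{b}_\Lambda\cap\mathfrak{p})/\mathfrak{a}|}.\]
   Context: $R_2=\mathbb{Z}[u_1^{\pm1},u_2^{\pm1}]$; $\mathcal{L}_2$ is the set of finite-index subgroups of $\mathbb{Z}^2$; for $\Lambda\in\mathcal{L}_2$, $\mathfrak{b}_\Lambda$ is the ideal of $R_2$ generated by $\{u^{\mathbf{n}}-1:\mathbf{n}\in\Lambda\}$ with $u^{\mathbf{n}}=u_1^{n_1}u_2^{n_2}$. *)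

theory Defs
  imports Complex_Main "HOL-Library.Poly_Mapping" "HOL-Library.Product_Plus"
begin

text \<open>R_2 = Z[u1^{+-1}, u2^{+-1}] realised as the group ring of Z^2:
  finitely supported functions Z^2 -> Z with convolution product.\<close>
type_synonym R2 = "(int \<times> int) \<Rightarrow>\<^sub>0 int"

definition upow :: "int \<times> int \<Rightarrow> R2" where
  "upow n = Poly_Mapping.single n 1"

definition is_ideal :: "R2 set \<Rightarrow> bool" where
  "is_ideal I \<longleftrightarrow> module.subspace ((*) :: R2 \<Rightarrow> R2 \<Rightarrow> R2) I"

definition ideal_gen :: "R2 set \<Rightarrow> R2 set" where
  "ideal_gen S = module.span ((*) :: R2 \<Rightarrow> R2 \<Rightarrow> R2) S"

definition prime_ideal :: "R2 set \<Rightarrow> bool" where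
  "prime_ideal P \<longleftrightarrow> is_ideal P \<and> P \<noteq> UNIV \<and>
     (\<forall>a b. a * b \<in> P \<longrightarrow> a \<in> P \<or> b \<in> P)"

definition ideal_prod :: "R2 set \<Rightarrow> R2 set \<Rightarrow> R2 set" where
  "ideal_prod I J = ideal_gen {x * y | x y. x \<in> I \<and> y \<in> J}"

definition ideal_sum :: "R2 set \<Rightarrow> R2 set \<Rightarrow> R2 set" where
  "ideal_sum I J = {x + y | x y. x \<in> I \<and> y \<in> J}"

definition finite_index_subgroup :: "(int \<times> int) set \<Rightarrow> bool" where
  "finite_index_subgroup \<Lambda> \<longleftrightarrow> 0 \<in> \<Lambda> \<and> (\<forall>x\<in>\<Lambda>. \<forall>y\<in>\<Lambda>. x - y \<in> \<Lambda>) \<and>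
     finite ((\<lambda>x. {y. x - y \<in> \<Lambda>}) ` UNIV)"

definition b_ideal :: "(int \<times> int) set \<Rightarrow> R2 set" where
  "b_ideal \<Lambda> = ideal_gen {upow n - 1 | n. n \<in> \<Lambda>}"

definition ideal_smult :: "(R2 \<Rightarrow> 'm \<Rightarrow> 'm::ab_group_add) \<Rightarrow> R2 set \<Rightarrow> 'm set \<Rightarrow> 'm set" where
  "ideal_smult s I N = module.span s {s r m | r m. r \<in> I \<and> m \<in> N}"

definition quot :: "'a::ab_group_add set \<Rightarrow> 'a set \<Rightarrow> 'a set set" where
  "quot N K = (\<lambda>x. {y \<in> N. x - y \<in> K}) ` N"

definition noetherian_submodule :: "(R2 \<Rightarrow> 'm \<Rightarrow> 'm::ab_group_add) \<Rightarrow> 'm set \<Rightarrow> bool" where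
  "noetherian_submodule s N \<longleftrightarrow> module.subspace s N \<and>
     (\<forall>K. module.subspace s K \<and> K \<subseteq> N \<longrightarrow> (\<exists>F. finite F \<and> module.span s F = K))"

text \<open>M/L is isomorphic to R2/P as R2-modules, expressed on representatives:
  phi induces an R2-linear bijection M/L -> R2/P.\<close>
definition quot_iso_R_mod :: "(R2 \<Rightarrow> 'm \<Rightarrow> 'm::ab_group_add) \<Rightarrow> 'm set \<Rightarrow> 'm set \<Rightarrow> R2 set \<Rightarrow> bool" where
  "quot_iso_R_mod s M L P \<longleftrightarrow> (\<exists>\<phi> :: 'm \<Rightarrow> R2.
     (\<forall>x\<in>M. \<forall>y\<in>M. \<phi> (x + y) - (\<phi> x + \<phi> y) \<in> P) \<and>
     (\<forall>r. \<forall>x\<in>M. \<phi> (s r x) - r * \<phi> x \<in> P) \<and>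
     (\<forall>a. \<exists>x\<in>M. \<phi> x - a \<in> P) \<and>
     (\<forall>x\<in>M. \<phi> x \<in> P \<longleftrightarrow> x \<in> L))"

end

theory Submission
  imports Defs "HOL-Library.FuncSet"
begin

text \<open>
  Write \<open>b\<close> for \<open>b\<^sub>\<Lambda>\<close> and choose \<open>x0 \<in> M\<close> mapping to \<open>1 \<in> R\<^sub>2/P\<close>, so that \<open>M = R\<^sub>2 x0 + L\<close>.
  The chains \<open>b M \<subseteq> L + b M \<subseteq> M\<close> and \<open>b L \<subseteq> L \<inter> b M \<subseteq> L\<close> split both indices:
  the isomorphism \<open>M/L \<cong> R\<^sub>2/P\<close> gives \<open>M/(L + b M) \<cong> R\<^sub>2/(b + P)\<close>, one has
  \<open>(L + b M)/b M \<cong> L/(L \<inter> b M)\<close>, and \<open>r \<mapsto> r x0\<close> induces \<open>(b \<inter> P)/\<aa> \<cong> (L \<inter> b M)/b L\<close>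
  for the ideal \<open>\<aa> = {r \<in> b \<inter> P. r x0 \<in> b L}\<close> (\<open>x0_relations\<close> below), which contains \<open>b P\<close> since \<open>P x0 \<subseteq> L\<close>.
  The finiteness of \<open>L/b L\<close> needed for this count comes from two facts: \<open>L/b L\<close> is
  generated as an abelian group by finitely many elements, because \<open>L\<close> is finitely generated
  and \<open>R\<^sub>2/b\<close> is spanned over \<open>\<int>\<close> by finitely many monomials; and each element of \<open>L/b L\<close> has
  finite additive order, because \<open>M/b M\<close> is finite.
\<close>

definition add_subgroup :: "'a::ab_group_add set \<Rightarrow> bool" where
  "add_subgroup X \<longleftrightarrow> 0 \<in> X \<and> (\<forall>x\<in>X. \<forall>y\<in>X. x - y \<in> X)"

lemma add_subgroup_0: "add_subgroup X \<Longrightarrow> 0 \<in> X"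
  by (simp add: add_subgroup_def)

lemma add_subgroup_diff: "add_subgroup X \<Longrightarrow> x \<in> X \<Longrightarrow> y \<in> X \<Longrightarrow> x - y \<in> X"
  by (simp add: add_subgroup_def)

lemma add_subgroup_neg: "add_subgroup X \<Longrightarrow> x \<in> X \<Longrightarrow> - x \<in> X"
  using add_subgroup_diff[of X 0 x] add_subgroup_0 by fastforce

lemma add_subgroup_add: "add_subgroup X \<Longrightarrow> x \<in> X \<Longrightarrow> y \<in> X \<Longrightarrow> x + y \<in> X"
  using add_subgroup_diff[of X x "- y"] add_subgroup_neg[of X y] by fastforce

lemma (in module) add_subgroup_subspace: "subspace S \<Longrightarrow> add_subgroup S"
  by (simp add: add_subgroup_def subspace_0 subspace_diff)

abbreviation coset :: "'a::ab_group_add set \<Rightarrow> 'a set \<Rightarrow> 'a \<Rightarrow> 'a set" where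
  "coset X K x \<equiv> {z \<in> X. x - z \<in> K}"

lemma quot_eq_image: "quot X K = coset X K ` X"
  by (simp add: quot_def)

lemma coset_eq_iff:
  assumes "add_subgroup K" "x \<in> X" "y \<in> X"
  shows "coset X K x = coset X K y \<longleftrightarrow> x - y \<in> K"
proof
  assume "coset X K x = coset X K y"
  moreover have "y \<in> coset X K y" using assms add_subgroup_0[of K] by simp
  ultimately show "x - y \<in> K" by blast
next
  assume xy: "x - y \<in> K"
  have "x - z \<in> K \<longleftrightarrow> y - z \<in> K" for z
    using add_subgroup_diff[OF assms(1) _ xy, of "x - z"] add_subgroup_add[OF assms(1) _ xy, of "y - z"]
    by auto
  then show "coset X K x = coset X K y" by blast
qed

lemma card_image_eq_of_same_kernel:
  assumes "\<And>x y. x \<in> A \<Longrightarrow> y \<in> A \<Longrightarrow> f x = f y \<longleftrightarrow> g x = g y"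
  shows "card (f ` A) = card (g ` A) \<and> (finite (f ` A) \<longleftrightarrow> finite (g ` A))"
proof -
  have "bij_betw (\<lambda>b. g (inv_into A f b)) (f ` A) (g ` A)"
  proof (rule bij_betw_imageI)
    show "inj_on (\<lambda>b. g (inv_into A f b)) (f ` A)"
      by (rule inj_onI) (metis assms f_inv_into_f inv_into_into)
    show "(\<lambda>b. g (inv_into A f b)) ` f ` A = g ` A"
      using assms by (auto simp: image_iff intro: inv_into_into) (metis f_inv_into_f imageI inv_into_into)
  qed
  then show ?thesis by (simp add: bij_betw_same_card bij_betw_finite)
qed

lemma card_quot_eq_of_hom_mod:
  fixes h :: "'a::ab_group_add \<Rightarrow> 'b::ab_group_add"
  assumes X: "add_subgroup X" and K: "add_subgroup K" and K': "add_subgroup K'"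
    and into: "\<And>x. x \<in> X \<Longrightarrow> h x \<in> X'"
    and add: "\<And>x y. x \<in> X \<Longrightarrow> y \<in> X \<Longrightarrow> h (x + y) - (h x + h y) \<in> K'"
    and onto: "\<And>y. y \<in> X' \<Longrightarrow> \<exists>x\<in>X. h x - y \<in> K'"
    and kernel: "\<And>x. x \<in> X \<Longrightarrow> h x \<in> K' \<longleftrightarrow> x \<in> K"
  shows "card (quot X K) = card (quot X' K') \<and> (finite (quot X K) \<longleftrightarrow> finite (quot X' K'))"
proof -
  have "quot X' K' = (\<lambda>x. coset X' K' (h x)) ` X"
  proof
    show "quot X' K' \<subseteq> (\<lambda>x. coset X' K' (h x)) ` X"
    proof
      fix C assume "C \<in> quot X' K'"
      then obtain y where y: "y \<in> X'" "C = coset X' K' y" by (auto simp: quot_def)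
      obtain x where x: "x \<in> X" "h x - y \<in> K'" using onto y(1) by blast
      then have "coset X' K' (h x) = C" using coset_eq_iff[OF K' into[OF x(1)] y(1)] y(2) by simp
      then show "C \<in> (\<lambda>x. coset X' K' (h x)) ` X" using x(1) by blast
    qed
    show "(\<lambda>x. coset X' K' (h x)) ` X \<subseteq> quot X' K'" using into by (auto simp: quot_def)
  qed
  moreover have "coset X K x = coset X K y \<longleftrightarrow> coset X' K' (h x) = coset X' K' (h y)"
    if xy: "x \<in> X" "y \<in> X" for x y
  proof -
    have d: "x - y \<in> X" using add_subgroup_diff[OF X xy] .
    have "h x - (h (x - y) + h y) \<in> K'" using add[OF d xy(2)] by simp
    then have "h x - h y \<in> K' \<longleftrightarrow> h (x - y) \<in> K'"
      using add_subgroup_diff[OF K', of "h x - h y" "h x - (h (x - y) + h y)"]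
        add_subgroup_add[OF K', of "h x - (h (x - y) + h y)" "h (x - y)"]
      by (auto simp: algebra_simps)
    then show ?thesis
      using coset_eq_iff[OF K xy] coset_eq_iff[OF K' into[OF xy(1)] into[OF xy(2)]] kernel[OF d] by simp
  qed
  ultimately show ?thesis
    unfolding quot_eq_image[of X K]
    using card_image_eq_of_same_kernel[of X "coset X K" "\<lambda>x. coset X' K' (h x)"] by presburger
qed

lemma card_cosets_in_coset:
  assumes X: "add_subgroup X" and Y: "add_subgroup Y" and ZX: "Z \<subseteq> X" and d: "d \<in> X"
  shows "card (coset X Y ` coset X Z d) = card (quot Z Y) \<and>
    (finite (coset X Y ` coset X Z d) \<longleftrightarrow> finite (quot Z Y))"
proof -
  have shift: "coset X Z d = (\<lambda>z. d - z) ` Z"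
  proof (intro set_eqI iffI)
    fix w assume "w \<in> coset X Z d"
    then show "w \<in> (\<lambda>z. d - z) ` Z" by (auto intro: image_eqI[of _ _ "d - w"])
  next
    fix w assume "w \<in> (\<lambda>z. d - z) ` Z"
    then show "w \<in> coset X Z d" using add_subgroup_diff[OF X d] ZX by auto
  qed
  have "coset X Y (d - z) = coset X Y (d - z') \<longleftrightarrow> coset Z Y z = coset Z Y z'"
    if z: "z \<in> Z" "z' \<in> Z" for z z'
  proof -
    have "d - z \<in> X" "d - z' \<in> X" using z d ZX add_subgroup_diff[OF X] by blast+
    then have "coset X Y (d - z) = coset X Y (d - z') \<longleftrightarrow> - (z - z') \<in> Y"
      using coset_eq_iff[OF Y] by simp
    also have "\<dots> \<longleftrightarrow> z - z' \<in> Y" using add_subgroup_neg[OF Y] by fastforce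
    finally show ?thesis using coset_eq_iff[OF Y z] by simp
  qed
  then show ?thesis
    unfolding shift image_image quot_eq_image[of Z Y]
    using card_image_eq_of_same_kernel[of Z "\<lambda>z. coset X Y (d - z)" "coset Z Y"] by presburger
qed

lemma card_quot_tower:
  assumes X: "add_subgroup X" and Z: "add_subgroup Z" and Y: "add_subgroup Y"
    and YZ: "Y \<subseteq> Z" and ZX: "Z \<subseteq> X" and fin: "finite (quot X Y)"
  shows "finite (quot X Z) \<and> finite (quot Z Y) \<and> card (quot X Y) = card (quot X Z) * card (quot Z Y)"
proof -
  have coarsen: "coset X Z (SOME x'. x' \<in> coset X Y x) = coset X Z x" if x: "x \<in> X" for x
  proof -
    have "x \<in> coset X Y x" using x add_subgroup_0[OF Y] by simp
    then have "(SOME x'. x' \<in> coset X Y x) \<in> coset X Y x" by (rule someI)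
    then have "(SOME x'. x' \<in> coset X Y x) \<in> X" "- (x - (SOME x'. x' \<in> coset X Y x)) \<in> Z"
      using YZ add_subgroup_neg[OF Z] by (auto simp del: minus_diff_eq)
    then show ?thesis using coset_eq_iff[OF Z _ x] by simp
  qed
  then have "quot X Z = (\<lambda>C. coset X Z (SOME x. x \<in> C)) ` quot X Y"
    unfolding quot_eq_image image_image by simp
  then have finXZ: "finite (quot X Z)" using fin by simp
  have fibres: "card (coset X Y ` D) = card (quot Z Y) \<and> (finite (coset X Y ` D) \<longleftrightarrow> finite (quot Z Y))"
    if "D \<in> quot X Z" for D
    using that card_cosets_in_coset[OF X Y ZX] unfolding quot_eq_image by blast
  have partition: "quot X Y = (\<Union>D\<in>quot X Z. coset X Y ` D)"
  proof (intro equalityI subsetI)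
    fix C assume "C \<in> quot X Y"
    then obtain x where x: "x \<in> X" "C = coset X Y x" unfolding quot_eq_image by blast
    then have "x \<in> coset X Z x" "coset X Z x \<in> quot X Z"
      using add_subgroup_0[OF Z] unfolding quot_eq_image by auto
    then show "C \<in> (\<Union>D\<in>quot X Z. coset X Y ` D)" using x(2) by blast
  next
    fix C assume "C \<in> (\<Union>D\<in>quot X Z. coset X Y ` D)"
    then show "C \<in> quot X Y" unfolding quot_eq_image by blast
  qed
  have finZY: "finite (quot Z Y)"
  proof -
    have "coset X Z 0 \<in> quot X Z" unfolding quot_eq_image using add_subgroup_0[OF X] by blast
    moreover from this have "coset X Y ` coset X Z 0 \<subseteq> quot X Y"
      using partition by blast
    then have "finite (coset X Y ` coset X Z 0)" using fin by (rule finite_subset)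
    ultimately show ?thesis using fibres by blast
  qed
  have disjoint: "coset X Y ` D1 \<inter> coset X Y ` D2 = {}"
    if D: "D1 \<in> quot X Z" "D2 \<in> quot X Z" "D1 \<noteq> D2" for D1 D2
  proof (rule ccontr)
    assume "coset X Y ` D1 \<inter> coset X Y ` D2 \<noteq> {}"
    then obtain x1 x2 where x: "x1 \<in> D1" "x2 \<in> D2" "coset X Y x1 = coset X Y x2" by blast
    obtain d1 d2 where d: "d1 \<in> X" "D1 = coset X Z d1" "d2 \<in> X" "D2 = coset X Z d2"
      using D unfolding quot_eq_image by blast
    have "x1 - x2 \<in> Z" using x d coset_eq_iff[OF Y, of x1 X x2] YZ by auto
    then have "(d1 - x1) + (x1 - x2) - (d2 - x2) \<in> Z"
      using x d add_subgroup_add[OF Z] add_subgroup_diff[OF Z] by blast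
    then have "D1 = D2" using d coset_eq_iff[OF Z d(1) d(3)] by simp
    then show False using D(3) by contradiction
  qed
  have "card (quot X Y) = (\<Sum>D\<in>quot X Z. card (coset X Y ` D))"
    unfolding partition by (rule card_UN_disjoint) (use finXZ fibres finZY disjoint in auto)
  also have "\<dots> = card (quot X Z) * card (quot Z Y)" using fibres by simp
  finally show ?thesis using finXZ finZY by simp
qed

lemma (in module) subspace_plus:
  assumes "subspace S" "subspace T"
  shows "subspace {x + y | x y. x \<in> S \<and> y \<in> T}"
proof (rule subspaceI)
  show "0 \<in> {x + y | x y. x \<in> S \<and> y \<in> T}" using assms subspace_0 by force
  show "u + v \<in> {x + y | x y. x \<in> S \<and> y \<in> T}"
    if u: "u \<in> {x + y | x y. x \<in> S \<and> y \<in> T}" and v: "v \<in> {x + y | x y. x \<in> S \<and> y \<in> T}"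
    for u v
  proof -
    obtain x y x' y' where "u = x + y" "v = x' + y'" "x \<in> S" "y \<in> T" "x' \<in> S" "y' \<in> T"
      using u v by blast
    then have "u + v = (x + x') + (y + y')" "x + x' \<in> S" "y + y' \<in> T"
      using assms subspace_add by (auto simp: algebra_simps)
    then show ?thesis by blast
  qed
  show "c *s u \<in> {x + y | x y. x \<in> S \<and> y \<in> T}" if "u \<in> {x + y | x y. x \<in> S \<and> y \<in> T}" for c u
    using that assms subspace_scale scale_right_distrib by blast
qed

lemma (in module) int_multiple_mem_of_finite_quot:
  assumes X: "subspace X" and K: "subspace K" and fin: "finite (quot X K)" and x: "x \<in> X"
  shows "\<exists>k>0. of_int k *s x \<in> K"
proof -
  define f where "f j = coset X K (of_int j *s x)" for j :: int
  have "f ` {0..int (card (quot X K))} \<subseteq> quot X K"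
    unfolding f_def quot_eq_image using subspace_scale[OF X x] by blast
  then have "\<not> inj_on f {0..int (card (quot X K))}"
    using card_inj_on_le[OF _ _ fin] by fastforce
  then obtain i j where "i \<noteq> j" "f i = f j" unfolding inj_on_def by blast
  then have "of_int (i - j) *s x \<in> K"
    using coset_eq_iff[OF add_subgroup_subspace[OF K] subspace_scale[OF X x] subspace_scale[OF X x]]
    unfolding f_def by (simp add: scale_left_diff_distrib)
  moreover from this have "of_int (j - i) *s x \<in> K"
    using subspace_neg[OF K] by (metis minus_diff_eq of_int_minus scale_minus_left)
  ultimately show ?thesis using \<open>i \<noteq> j\<close> by (metis diff_gt_0_iff_gt linorder_neqE)
qed

lemma (in module) finite_quot_of_torsion_generators:
  fixes e :: "'i \<Rightarrow> 'b"
  assumes X: "subspace X" and K: "subspace K" and I: "finite I" and eX: "\<And>i. i \<in> I \<Longrightarrow> e i \<in> X"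
    and torsion: "\<And>i. i \<in> I \<Longrightarrow> \<exists>c>0. of_int c *s e i \<in> K"
    and spanning: "\<And>x. x \<in> X \<Longrightarrow> \<exists>a. x - (\<Sum>i\<in>I. of_int (a i) *s e i) \<in> K"
  shows "finite (quot X K)"
proof -
  obtain c where c: "\<And>i. i \<in> I \<Longrightarrow> c i > 0 \<and> of_int (c i) *s e i \<in> K"
    using torsion by metis
  define comb where "comb t = (\<Sum>i\<in>I. of_int (t i) *s e i)" for t
  define T where "T = (\<Pi>\<^sub>E i\<in>I. {0..<c i})"
  have comb_X: "comb t \<in> X" for t
    unfolding comb_def by (intro subspace_sum[OF X] subspace_scale[OF X] eX)
  have reduce: "comb a - comb (\<lambda>i. a i mod c i) \<in> K" for a
  proof -
    have "of_int (a i) *s e i - of_int (a i mod c i) *s e i = of_int (a i div c i) *s (of_int (c i) *s e i)"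
      for i
      by (simp flip: scale_left_diff_distrib of_int_mult of_int_diff add: minus_mod_eq_mult_div mult.commute)
    then show ?thesis
      unfolding comb_def sum_subtractf[symmetric]
      by (metis (no_types, lifting) K c subspace_scale subspace_sum)
  qed
  have "quot X K \<subseteq> (\<lambda>t. coset X K (comb t)) ` T"
  proof
    fix C assume "C \<in> quot X K"
    then obtain x where x: "x \<in> X" "C = coset X K x" unfolding quot_eq_image by blast
    obtain a where a: "x - comb a \<in> K" using spanning[OF x(1)] unfolding comb_def by blast
    define t where "t = restrict (\<lambda>i. a i mod c i) I"
    have "comb t = comb (\<lambda>i. a i mod c i)" unfolding comb_def t_def by simp
    then have "x - comb t \<in> K"
      using subspace_add[OF K a reduce[of a]] by simp
    moreover have "t \<in> T" unfolding T_def t_def using c by simp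
    ultimately show "C \<in> (\<lambda>t. coset X K (comb t)) ` T"
      using x coset_eq_iff[OF add_subgroup_subspace[OF K] x(1) comb_X] by blast
  qed
  moreover have "finite T" unfolding T_def using I by (simp add: finite_PiE)
  ultimately show ?thesis using finite_surj by blast
qed

interpretation R2: module "(*) :: R2 \<Rightarrow> R2 \<Rightarrow> R2"
  by unfold_locales (simp_all add: algebra_simps)

lemma upow_add: "upow (m + n) = upow m * upow n"
  by (simp add: upow_def mult_single)

lemma finite_index_subgroup_representatives:
  assumes "finite_index_subgroup \<Lambda>"
  obtains G \<rho> where "finite G" "\<And>n. \<rho> n \<in> G" "\<And>n. n - \<rho> n \<in> \<Lambda>"
proof
  define \<rho> where "\<rho> n = (SOME m. n - m \<in> \<Lambda>)" for n
  show "finite (\<rho> ` UNIV)"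
  proof -
    have "range \<rho> = (\<lambda>C. SOME m. m \<in> C) ` range (\<lambda>x. {y. x - y \<in> \<Lambda>})"
      unfolding \<rho>_def by (simp add: image_image)
    then show ?thesis using assms unfolding finite_index_subgroup_def by simp
  qed
  show "\<rho> n \<in> range \<rho>" for n by simp
  show "n - \<rho> n \<in> \<Lambda>" for n
    unfolding \<rho>_def by (rule someI[of _ n]) (use assms in \<open>simp add: finite_index_subgroup_def\<close>)
qed

lemma upow_diff_mem_b_ideal:
  assumes "n - m \<in> \<Lambda>"
  shows "upow n - upow m \<in> b_ideal \<Lambda>"
proof -
  have "upow (n - m) - 1 \<in> b_ideal \<Lambda>"
    unfolding b_ideal_def ideal_gen_def by (rule R2.span_base) (use assms in blast)
  then have "upow m * (upow (n - m) - 1) \<in> b_ideal \<Lambda>"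
    unfolding b_ideal_def ideal_gen_def by (rule R2.span_scale)
  then show ?thesis by (simp add: algebra_simps flip: upow_add)
qed

lemma int_span_mod_b_ideal:
  assumes "finite_index_subgroup \<Lambda>"
  obtains G where "finite G" "\<And>r. \<exists>a. r - (\<Sum>g\<in>G. of_int (a g) * upow g) \<in> b_ideal \<Lambda>"
proof -
  obtain G \<rho> where G: "finite G" "\<And>n. \<rho> n \<in> G" "\<And>n. n - \<rho> n \<in> \<Lambda>"
    using finite_index_subgroup_representatives[OF assms] by blast
  have b: "R2.subspace (b_ideal \<Lambda>)" unfolding b_ideal_def ideal_gen_def by simp
  define good where "good r \<longleftrightarrow> (\<exists>a. r - (\<Sum>g\<in>G. of_int (a g) * upow g) \<in> b_ideal \<Lambda>)" for r
  have "good r" for r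
  proof (rule frag_induction[of r UNIV good])
    show "good 0" unfolding good_def using R2.subspace_0[OF b] by (intro exI[of _ "\<lambda>_. 0"]) simp
  next
    fix n
    have "(\<Sum>g\<in>G. of_int (if g = \<rho> n then 1 else 0) * upow g) = (\<Sum>g\<in>G. if g = \<rho> n then upow g else 0)"
      by (rule sum.cong) auto
    also have "\<dots> = upow (\<rho> n)" using G(1,2) by simp
    finally have "(\<Sum>g\<in>G. of_int (if g = \<rho> n then 1 else 0) * upow g) = upow (\<rho> n)" .
    then show "good (frag_of n)"
      unfolding good_def using upow_diff_mem_b_ideal[OF G(3)]
      by (intro exI[of _ "\<lambda>g. if g = \<rho> n then 1 else 0"]) (simp add: upow_def)
  next
    fix r r' assume "good r" "good r'"
    then obtain a a' where "r - (\<Sum>g\<in>G. of_int (a g) * upow g) \<in> b_ideal \<Lambda>"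
      "r' - (\<Sum>g\<in>G. of_int (a' g) * upow g) \<in> b_ideal \<Lambda>" unfolding good_def by blast
    from R2.subspace_diff[OF b this]
    have "(r - r') - (\<Sum>g\<in>G. of_int (a g - a' g) * upow g) \<in> b_ideal \<Lambda>"
      by (simp add: algebra_simps sum_subtractf)
    then show "good (r - r')" unfolding good_def by (intro exI[of _ "\<lambda>g. a g - a' g"])
  qed simp
  then show ?thesis using G(1) that unfolding good_def by blast
qed

locale R2_module = module s for s :: "R2 \<Rightarrow> 'm::ab_group_add \<Rightarrow> 'm"
begin

lemma subspace_ideal_smult: "subspace (ideal_smult s I X)"
  unfolding ideal_smult_def by simp

lemma scale_mem_ideal_smult: "r \<in> I \<Longrightarrow> x \<in> X \<Longrightarrow> s r x \<in> ideal_smult s I X"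
  unfolding ideal_smult_def by (rule span_base) blast

lemma ideal_smult_subset: "subspace X \<Longrightarrow> ideal_smult s I X \<subseteq> X"
  unfolding ideal_smult_def by (rule span_minimal) (auto intro: subspace_scale)

lemma ideal_smult_mono: "X \<subseteq> Y \<Longrightarrow> ideal_smult s I X \<subseteq> ideal_smult s I Y"
  unfolding ideal_smult_def by (rule span_mono) blast

lemma int_combination_mod_ideal_smult:
  fixes w :: "'g \<Rightarrow> R2"
  assumes F: "finite F" "span F = L" and b: "R2.subspace b"
    and w: "\<And>r. \<exists>a. r - (\<Sum>g\<in>G. of_int (a g) * w g) \<in> b"
    and l: "l \<in> L"
  shows "\<exists>a. l - (\<Sum>i\<in>F \<times> G. s (of_int (a i)) (s (w (snd i)) (fst i))) \<in> ideal_smult s b L"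
proof -
  obtain u where u: "l = (\<Sum>f\<in>F. s (u f) f)" using l F span_finite by blast
  obtain a where a: "\<And>r. r - (\<Sum>g\<in>G. of_int (a r g) * w g) \<in> b" using w by metis
  have "l - (\<Sum>(f, g)\<in>F \<times> G. s (of_int (a (u f) g)) (s (w g) f))
      = (\<Sum>f\<in>F. s (u f - (\<Sum>g\<in>G. of_int (a (u f) g) * w g)) f)"
    unfolding u sum.cartesian_product[symmetric]
    by (simp add: scale_left_diff_distrib scale_sum_left sum_subtractf)
  also have "\<dots> \<in> ideal_smult s b L"
    using F span_superset a
    by (intro subspace_sum[OF subspace_ideal_smult] scale_mem_ideal_smult) blast+
  finally show ?thesis by (auto simp: case_prod_beta')
qed

end

locale cyclic_extension = R2_module s for s :: "R2 \<Rightarrow> 'm::ab_group_add \<Rightarrow> 'm" +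
  fixes M L :: "'m set" and P b :: "R2 set" and \<phi> :: "'m \<Rightarrow> R2" and x0 :: 'm
  assumes subspace_M: "subspace M" and subspace_L: "subspace L" and L_subset_M: "L \<subseteq> M"
    and ideal_P: "R2.subspace P" and ideal_b: "R2.subspace b"
    and \<phi>_add: "\<And>x y. x \<in> M \<Longrightarrow> y \<in> M \<Longrightarrow> \<phi> (x + y) - (\<phi> x + \<phi> y) \<in> P"
    and \<phi>_scale: "\<And>r x. x \<in> M \<Longrightarrow> \<phi> (s r x) - r * \<phi> x \<in> P"
    and \<phi>_onto: "\<And>a. \<exists>x\<in>M. \<phi> x - a \<in> P"
    and \<phi>_kernel: "\<And>x. x \<in> M \<Longrightarrow> \<phi> x \<in> P \<longleftrightarrow> x \<in> L"
    and x0_mem: "x0 \<in> M" and \<phi>_x0: "\<phi> x0 - 1 \<in> P"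
begin

abbreviation "bM \<equiv> ideal_smult s b M"
abbreviation "bL \<equiv> ideal_smult s b L"

lemma bM_subset_M: "bM \<subseteq> M"
  using ideal_smult_subset[OF subspace_M] .

lemma bL_subset_L: "bL \<subseteq> L"
  using ideal_smult_subset[OF subspace_L] .

lemma bL_subset_bM: "bL \<subseteq> bM"
  using ideal_smult_mono[OF L_subset_M] .

lemma scale_x0_mem: "s r x0 \<in> M"
  using subspace_scale[OF subspace_M x0_mem] .

lemma \<phi>_diff: "x \<in> M \<Longrightarrow> y \<in> M \<Longrightarrow> \<phi> (x - y) - (\<phi> x - \<phi> y) \<in> P"
  using R2.subspace_neg[OF ideal_P \<phi>_add[OF subspace_diff[OF subspace_M], of x y y]]
  by (simp add: algebra_simps)

lemma \<phi>_scale_x0: "\<phi> (s r x0) - r \<in> P"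
proof -
  have "(\<phi> (s r x0) - r * \<phi> x0) + r * (\<phi> x0 - 1) \<in> P"
    using R2.subspace_add[OF ideal_P \<phi>_scale[OF x0_mem, of r] R2.subspace_scale[OF ideal_P \<phi>_x0]] .
  then show ?thesis by (simp add: algebra_simps)
qed

lemma diff_scale_x0_mem_L:
  assumes m: "m \<in> M"
  shows "m - s (\<phi> m) x0 \<in> L"
proof -
  have "\<phi> (m - s (\<phi> m) x0) - (\<phi> m - \<phi> (s (\<phi> m) x0)) - (\<phi> (s (\<phi> m) x0) - \<phi> m) \<in> P"
    using R2.subspace_diff[OF ideal_P \<phi>_diff[OF m scale_x0_mem] \<phi>_scale_x0] .
  then have "\<phi> (m - s (\<phi> m) x0) \<in> P" by simp
  then show ?thesis using \<phi>_kernel[OF subspace_diff[OF subspace_M m scale_x0_mem]] by blast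
qed

lemma scale_x0_mem_L_iff: "s r x0 \<in> L \<longleftrightarrow> r \<in> P"
  using \<phi>_kernel[OF scale_x0_mem] \<phi>_scale_x0[of r]
    R2.subspace_diff[OF ideal_P, of "\<phi> (s r x0)" "\<phi> (s r x0) - r"]
    R2.subspace_add[OF ideal_P, of "\<phi> (s r x0) - r" r]
  by auto

text \<open>This holds because \<open>M = R\<^sub>2 x0 + L\<close>.\<close>
lemma bM_mod_bL: "y \<in> bM \<Longrightarrow> \<exists>r\<in>b. y - s r x0 \<in> bL"
proof -
  assume y: "y \<in> bM"
  let ?Q = "{y. \<exists>r\<in>b. y - s r x0 \<in> bL}"
  have "subspace ?Q"
  proof (rule subspaceI)
    show "0 \<in> ?Q" using R2.subspace_0[OF ideal_b] subspace_0[OF subspace_ideal_smult] by force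
    show "y1 + y2 \<in> ?Q" if y1: "y1 \<in> ?Q" and y2: "y2 \<in> ?Q" for y1 y2
    proof -
      obtain r1 r2 where r: "r1 \<in> b" "y1 - s r1 x0 \<in> bL" "r2 \<in> b" "y2 - s r2 x0 \<in> bL"
        using y1 y2 by blast
      have "(y1 - s r1 x0) + (y2 - s r2 x0) \<in> bL"
        using subspace_add[OF subspace_ideal_smult r(2,4)] .
      then have "r1 + r2 \<in> b" "(y1 + y2) - s (r1 + r2) x0 \<in> bL"
        using R2.subspace_add[OF ideal_b r(1,3)] by (simp_all add: algebra_simps)
      then show ?thesis by blast
    qed
    show "s c y1 \<in> ?Q" if y1: "y1 \<in> ?Q" for c y1
    proof -
      obtain r where r: "r \<in> b" "y1 - s r x0 \<in> bL" using y1 by blast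
      have "s c (y1 - s r x0) \<in> bL" using subspace_scale[OF subspace_ideal_smult r(2)] .
      then have "c * r \<in> b" "s c y1 - s (c * r) x0 \<in> bL"
        using R2.subspace_scale[OF ideal_b r(1)] by (simp_all add: scale_right_diff_distrib)
      then show ?thesis by blast
    qed
  qed
  moreover have "s r m \<in> ?Q" if "r \<in> b" "m \<in> M" for r m
  proof -
    have "s r (m - s (\<phi> m) x0) \<in> bL" using that diff_scale_x0_mem_L scale_mem_ideal_smult by blast
    moreover have "r * \<phi> m \<in> b" using R2.subspace_scale[OF ideal_b \<open>r \<in> b\<close>, of "\<phi> m"] by (simp add: mult.commute)
    ultimately show ?thesis by (auto simp: scale_right_diff_distrib)
  qed
  ultimately show ?thesis using span_subspace_induct[of y] y unfolding ideal_smult_def by blast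
qed

lemma \<phi>_bM: "y \<in> bM \<Longrightarrow> \<exists>\<beta>\<in>b. \<phi> y - \<beta> \<in> P"
proof -
  assume y: "y \<in> bM"
  then obtain r where r: "r \<in> b" "y - s r x0 \<in> bL" using bM_mod_bL by blast
  have yM: "y \<in> M" using y bM_subset_M by blast
  have "\<phi> (y - s r x0) \<in> P"
    using \<phi>_kernel[OF subspace_diff[OF subspace_M yM scale_x0_mem]] r(2) bL_subset_L by blast
  then have "\<phi> (y - s r x0) - (\<phi> (y - s r x0) - (\<phi> y - \<phi> (s r x0))) + (\<phi> (s r x0) - r) \<in> P"
    using R2.subspace_add[OF ideal_P] R2.subspace_diff[OF ideal_P] \<phi>_diff[OF yM scale_x0_mem]
      \<phi>_scale_x0 by blast
  then show ?thesis using r(1) by (auto simp: algebra_simps)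
qed

lemma P_scale_bM: "p \<in> P \<Longrightarrow> y \<in> bM \<Longrightarrow> s p y \<in> bL"
proof -
  assume p: "p \<in> P" and y: "y \<in> bM"
  obtain r where r: "r \<in> b" "y - s r x0 \<in> bL" using bM_mod_bL[OF y] by blast
  have "s p (y - s r x0) + s r (s p x0) \<in> bL"
    using p r scale_x0_mem_L_iff
    by (intro subspace_add[OF subspace_ideal_smult] subspace_scale[OF subspace_ideal_smult]
        scale_mem_ideal_smult) auto
  then show ?thesis by (simp add: scale_right_diff_distrib mult.commute)
qed

text \<open>Write \<open>k0 = \<beta> + \<pi>\<close> with \<open>\<beta> \<in> b\<close>, \<open>\<pi> \<in> P\<close>, where \<open>k0 > 0\<close> and \<open>k0 x0 \<in> b M\<close>. If
  \<open>k e \<in> b M\<close>, then \<open>\<beta> k e \<in> b L\<close> because \<open>k e \<in> L\<close>, and \<open>\<pi> k e \<in> b L\<close> because \<open>P b M \<subseteq> b L\<close>.\<close>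
lemma L_torsion_mod_bL:
  assumes fin: "finite (quot M bM)" and e: "e \<in> L"
  shows "\<exists>c>0. s (of_int c) e \<in> bL"
proof -
  have torsion: "\<exists>k>0. s (of_int k) x \<in> bM" if "x \<in> M" for x
    using int_multiple_mem_of_finite_quot[OF subspace_M subspace_ideal_smult fin that] .
  obtain k0 where k0: "k0 > 0" "s (of_int k0) x0 \<in> bM" using torsion[OF x0_mem] by blast
  obtain \<beta> where \<beta>: "\<beta> \<in> b" "\<phi> (s (of_int k0) x0) - \<beta> \<in> P" using \<phi>_bM[OF k0(2)] by blast
  have \<pi>: "of_int k0 - \<beta> \<in> P"
    using R2.subspace_diff[OF ideal_P \<beta>(2) \<phi>_scale_x0[of "of_int k0"]] by simp
  obtain k where k: "k > 0" "s (of_int k) e \<in> bM" using torsion e L_subset_M by blast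
  have "s \<beta> (s (of_int k) e) + s (of_int k0 - \<beta>) (s (of_int k) e) \<in> bL"
    using subspace_add[OF subspace_ideal_smult
        scale_mem_ideal_smult[OF \<beta>(1) subspace_scale[OF subspace_L e]] P_scale_bM[OF \<pi> k(2)]] .
  moreover have "\<beta> * of_int k + (of_int k0 - \<beta>) * of_int k = (of_int (k0 * k) :: R2)"
    by (simp add: algebra_simps)
  ultimately have "s (of_int (k0 * k)) e \<in> bL" by (simp only: scale_scale flip: scale_left_distrib)
  then show ?thesis using k0(1) k(1) by (intro exI[of _ "k0 * k"]) simp
qed

lemma finite_quot_bL:
  fixes w :: "'g \<Rightarrow> R2"
  assumes fin: "finite (quot M bM)" and F: "finite F" "span F = L"
    and G: "finite G" "\<And>r. \<exists>a. r - (\<Sum>g\<in>G. of_int (a g) * w g) \<in> b"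
  shows "finite (quot L bL)"
proof (rule finite_quot_of_torsion_generators[OF subspace_L subspace_ideal_smult])
  show "finite (F \<times> G)" using F(1) G(1) by simp
  have "F \<subseteq> L" using F(2) span_superset by blast
  then show e: "s (w (snd i)) (fst i) \<in> L" if "i \<in> F \<times> G" for i
    using that subspace_scale[OF subspace_L] by auto
  show "\<exists>c>0. s (of_int c) (s (w (snd i)) (fst i)) \<in> bL" if "i \<in> F \<times> G" for i
    using L_torsion_mod_bL[OF fin e[OF that]] .
  show "\<exists>a. l - (\<Sum>i\<in>F \<times> G. s (of_int (a i)) (s (w (snd i)) (fst i))) \<in> bL" if "l \<in> L" for l
    using int_combination_mod_ideal_smult[OF F ideal_b G(2) that] .
qed

abbreviation "L_plus_bM \<equiv> {l + n | l n. l \<in> L \<and> n \<in> bM}"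

lemma subspace_L_plus_bM: "subspace L_plus_bM"
  using subspace_plus[OF subspace_L subspace_ideal_smult] .

lemma card_quot_L_plus_bM:
  "card (quot M L_plus_bM) = card (quot UNIV (ideal_sum b P)) \<and>
   (finite (quot M L_plus_bM) \<longleftrightarrow> finite (quot UNIV (ideal_sum b P)))"
proof (rule card_quot_eq_of_hom_mod[where h = \<phi>])
  have "P \<subseteq> ideal_sum b P"
    unfolding ideal_sum_def using R2.subspace_0[OF ideal_b] by force
  then show "\<phi> (x + y) - (\<phi> x + \<phi> y) \<in> ideal_sum b P" if "x \<in> M" "y \<in> M" for x y
    using \<phi>_add that by blast
  show "\<exists>x\<in>M. \<phi> x - a \<in> ideal_sum b P" for a
    using \<phi>_onto \<open>P \<subseteq> ideal_sum b P\<close> by blast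
  show "\<phi> x \<in> ideal_sum b P \<longleftrightarrow> x \<in> L_plus_bM" if x: "x \<in> M" for x
  proof
    assume "\<phi> x \<in> ideal_sum b P"
    then obtain \<beta> p where "\<phi> x = \<beta> + p" "\<beta> \<in> b" "p \<in> P" unfolding ideal_sum_def by blast
    then have "\<phi> (x - s \<beta> x0) - (\<phi> x - \<phi> (s \<beta> x0)) - (\<phi> (s \<beta> x0) - \<beta>) + p \<in> P"
      using R2.subspace_add[OF ideal_P] R2.subspace_diff[OF ideal_P] \<phi>_diff[OF x scale_x0_mem]
        \<phi>_scale_x0 by blast
    then have "\<phi> (x - s \<beta> x0) \<in> P" using \<open>\<phi> x = \<beta> + p\<close> by (simp add: algebra_simps)
    then have "x - s \<beta> x0 \<in> L" using \<phi>_kernel subspace_diff[OF subspace_M x scale_x0_mem] by blast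
    moreover have "s \<beta> x0 \<in> bM" using scale_mem_ideal_smult \<open>\<beta> \<in> b\<close> x0_mem by blast
    ultimately show "x \<in> L_plus_bM" by force
  next
    assume "x \<in> L_plus_bM"
    then obtain l n where ln: "x = l + n" "l \<in> L" "n \<in> bM" by blast
    have lnM: "l \<in> M" "n \<in> M" using ln L_subset_M bM_subset_M by blast+
    obtain \<beta> where \<beta>: "\<beta> \<in> b" "\<phi> n - \<beta> \<in> P" using \<phi>_bM[OF ln(3)] by blast
    have "\<phi> l \<in> P" using \<phi>_kernel lnM ln(2) by blast
    then have "(\<phi> (l + n) - (\<phi> l + \<phi> n)) + \<phi> l + (\<phi> n - \<beta>) \<in> P"
      using R2.subspace_add[OF ideal_P] \<phi>_add lnM \<beta>(2) by blast
    then have "\<phi> x - \<beta> \<in> P" using ln(1) by (simp add: algebra_simps)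
    then show "\<phi> x \<in> ideal_sum b P" unfolding ideal_sum_def using \<beta>(1) by force
  qed
  show "add_subgroup M" "add_subgroup L_plus_bM"
    using add_subgroup_subspace subspace_M subspace_L_plus_bM by blast+
  show "add_subgroup (ideal_sum b P)"
    unfolding ideal_sum_def by (intro R2.add_subgroup_subspace R2.subspace_plus ideal_b ideal_P)
qed simp

lemma card_quot_L_plus_bM_bM:
  "card (quot L (L \<inter> bM)) = card (quot L_plus_bM bM) \<and>
   (finite (quot L (L \<inter> bM)) \<longleftrightarrow> finite (quot L_plus_bM bM))"
proof (rule card_quot_eq_of_hom_mod[where h = "\<lambda>x. x"])
  show "\<exists>x\<in>L. x - y \<in> bM" if y: "y \<in> L_plus_bM" for y
  proof -
    obtain l n where "y = l + n" "l \<in> L" "n \<in> bM" using y by blast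
    then show ?thesis using subspace_neg[OF subspace_ideal_smult] by force
  qed
  show "add_subgroup L" "add_subgroup (L \<inter> bM)" "add_subgroup bM"
    using add_subgroup_subspace subspace_L subspace_ideal_smult subspace_inter by blast+
  show "x \<in> L_plus_bM" if "x \<in> L" for x
    using that subspace_0[OF subspace_ideal_smult] by force
qed (use subspace_0[OF subspace_ideal_smult] in auto)

definition x0_relations :: "R2 set" where
  "x0_relations = {r \<in> b \<inter> P. s r x0 \<in> bL}"

lemma ideal_x0_relations: "is_ideal x0_relations"
  unfolding is_ideal_def x0_relations_def
proof (rule R2.subspaceI)
  show "0 \<in> {r \<in> b \<inter> P. s r x0 \<in> bL}"
    using R2.subspace_0 ideal_b ideal_P subspace_0[OF subspace_ideal_smult] by simp
  show "x + y \<in> {r \<in> b \<inter> P. s r x0 \<in> bL}" if "x \<in> {r \<in> b \<inter> P. s r x0 \<in> bL}" "y \<in> {r \<in> b \<inter> P. s r x0 \<in> bL}" for x y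
    using that R2.subspace_add ideal_b ideal_P subspace_add[OF subspace_ideal_smult]
    by (auto simp: scale_left_distrib)
  show "c * x \<in> {r \<in> b \<inter> P. s r x0 \<in> bL}" if "x \<in> {r \<in> b \<inter> P. s r x0 \<in> bL}" for c x
    using that R2.subspace_scale ideal_b ideal_P subspace_scale[OF subspace_ideal_smult, of "s x x0" _ _ c]
    by auto
qed

lemma ideal_prod_subset_x0_relations: "ideal_prod b P \<subseteq> x0_relations"
  unfolding ideal_prod_def ideal_gen_def
proof (rule R2.span_minimal)
  show "R2.subspace x0_relations" using ideal_x0_relations unfolding is_ideal_def .
  show "{x * y |x y. x \<in> b \<and> y \<in> P} \<subseteq> x0_relations"
  proof clarify
    fix x y assume xy: "x \<in> b" "y \<in> P"
    have "x * y \<in> b" "x * y \<in> P"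
      using R2.subspace_scale[OF ideal_b xy(1), of y] R2.subspace_scale[OF ideal_P xy(2), of x]
      by (simp_all add: mult.commute)
    moreover have "s x (s y x0) \<in> bL"
      using scale_mem_ideal_smult xy scale_x0_mem_L_iff by blast
    ultimately show "x * y \<in> x0_relations" unfolding x0_relations_def by simp
  qed
qed

lemma x0_relations_subset: "x0_relations \<subseteq> b \<inter> P"
  unfolding x0_relations_def by blast

lemma card_quot_x0_relations:
  "card (quot (b \<inter> P) x0_relations) = card (quot (L \<inter> bM) bL) \<and>
   (finite (quot (b \<inter> P) x0_relations) \<longleftrightarrow> finite (quot (L \<inter> bM) bL))"
proof (rule card_quot_eq_of_hom_mod[where h = "\<lambda>r. s r x0"])
  show "s r x0 \<in> L \<inter> bM" if "r \<in> b \<inter> P" for r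
    using that scale_x0_mem_L_iff scale_mem_ideal_smult x0_mem by blast
  show "\<exists>r\<in>b \<inter> P. s r x0 - y \<in> bL" if y: "y \<in> L \<inter> bM" for y
  proof -
    obtain r where r: "r \<in> b" "y - s r x0 \<in> bL" using bM_mod_bL y by blast
    have "y - (y - s r x0) \<in> L" using subspace_diff[OF subspace_L] y r(2) bL_subset_L by blast
    then have "r \<in> P" using scale_x0_mem_L_iff by simp
    moreover have "s r x0 - y \<in> bL" using subspace_neg[OF subspace_ideal_smult r(2)] by simp
    ultimately show ?thesis using r(1) by blast
  qed
  show "add_subgroup (b \<inter> P)"
    using R2.add_subgroup_subspace R2.subspace_inter ideal_b ideal_P by blast
  show "add_subgroup x0_relations"
    using R2.add_subgroup_subspace ideal_x0_relations unfolding is_ideal_def by blast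
  show "add_subgroup bL" using add_subgroup_subspace subspace_ideal_smult by blast
  show "s (x + y) x0 - (s x x0 + s y x0) \<in> bL" for x y
    using subspace_0[OF subspace_ideal_smult] by (simp add: scale_left_distrib)
  show "s r x0 \<in> bL \<longleftrightarrow> r \<in> x0_relations" if "r \<in> b \<inter> P" for r
    using that unfolding x0_relations_def by blast
qed

theorem card_quot_bM:
  assumes "finite (quot M bM)" and "finite (quot L bL)"
  shows "finite (quot (b \<inter> P) x0_relations) \<and>
    real (card (quot M bM)) =
      real (card (quot UNIV (ideal_sum b P))) *
      (real (card (quot L bL)) / real (card (quot (b \<inter> P) x0_relations)))"
proof -
  have "bM \<subseteq> L_plus_bM" using subspace_0[OF subspace_L] by force
  moreover have "L_plus_bM \<subseteq> M"
    using L_subset_M bM_subset_M subspace_add[OF subspace_M] by blast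
  ultimately have M_L_plus_bM: "finite (quot L_plus_bM bM)"
    "card (quot M bM) = card (quot M L_plus_bM) * card (quot L_plus_bM bM)"
    using card_quot_tower[OF _ _ _ _ _ assms(1)] add_subgroup_subspace subspace_M
      subspace_L_plus_bM subspace_ideal_smult by blast+
  have L_bM: "finite (quot (L \<inter> bM) bL)"
    "card (quot L bL) = card (quot L (L \<inter> bM)) * card (quot (L \<inter> bM) bL)"
    using card_quot_tower[OF _ _ _ _ _ assms(2)] add_subgroup_subspace subspace_L
      subspace_inter[OF subspace_L subspace_ideal_smult] subspace_ideal_smult
      bL_subset_L bL_subset_bM by blast+
  have "finite (quot (b \<inter> P) x0_relations)" using card_quot_x0_relations L_bM(1) by blast
  moreover have "quot (b \<inter> P) x0_relations \<noteq> {}"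
    using R2.subspace_0[OF ideal_b] R2.subspace_0[OF ideal_P] unfolding quot_eq_image by blast
  ultimately have "real (card (quot (b \<inter> P) x0_relations)) \<noteq> 0" by simp
  moreover have "card (quot M bM) = card (quot UNIV (ideal_sum b P)) * card (quot L (L \<inter> bM))"
    using M_L_plus_bM card_quot_L_plus_bM card_quot_L_plus_bM_bM by simp
  moreover have "card (quot L bL) = card (quot L (L \<inter> bM)) * card (quot (b \<inter> P) x0_relations)"
    using L_bM card_quot_x0_relations by simp
  ultimately show ?thesis using \<open>finite (quot (b \<inter> P) x0_relations)\<close> by (simp add: field_simps)
qed

end

theorem lemma5p2:
  fixes s :: "R2 \<Rightarrow> 'm::ab_group_add \<Rightarrow> 'm"
    and M L :: "'m set" and P :: "R2 set" and \<Lambda> :: "(int \<times> int) set"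
  assumes "module s"
    and "noetherian_submodule s M" and "noetherian_submodule s L" and "L \<subseteq> M"
    and "prime_ideal P" and "quot_iso_R_mod s M L P"
    and "finite_index_subgroup \<Lambda>"
    and "finite (quot M (ideal_smult s (b_ideal \<Lambda>) M))"
  shows "\<exists>A. is_ideal A \<and> ideal_prod (b_ideal \<Lambda>) P \<subseteq> A \<and> A \<subseteq> b_ideal \<Lambda> \<inter> P \<and>
      finite (quot L (ideal_smult s (b_ideal \<Lambda>) L)) \<and>
      finite (quot (b_ideal \<Lambda> \<inter> P) A) \<and>
      real (card (quot M (ideal_smult s (b_ideal \<Lambda>) M))) =
        real (card (quot UNIV (ideal_sum (b_ideal \<Lambda>) P))) *
        (real (card (quot L (ideal_smult s (b_ideal \<Lambda>) L))) /
         real (card (quot (b_ideal \<Lambda> \<inter> P) A)))"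
proof -
  interpret R2_module s using assms(1) by (simp add: R2_module_def)
  obtain \<phi> where \<phi>: "\<forall>x\<in>M. \<forall>y\<in>M. \<phi> (x + y) - (\<phi> x + \<phi> y) \<in> P"
    "\<forall>r. \<forall>x\<in>M. \<phi> (s r x) - r * \<phi> x \<in> P" "\<forall>a. \<exists>x\<in>M. \<phi> x - a \<in> P" "\<forall>x\<in>M. \<phi> x \<in> P \<longleftrightarrow> x \<in> L"
    using assms(6) unfolding quot_iso_R_mod_def by blast
  obtain x0 where "x0 \<in> M" "\<phi> x0 - 1 \<in> P" using \<phi>(3) by blast
  interpret cyclic_extension s M L P "b_ideal \<Lambda>" \<phi> x0
    using assms(2-5) \<phi> \<open>x0 \<in> M\<close> \<open>\<phi> x0 - 1 \<in> P\<close>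
    by unfold_locales
      (auto simp: noetherian_submodule_def prime_ideal_def is_ideal_def b_ideal_def ideal_gen_def)
  obtain F where F: "finite F" "span F = L"
    using assms(3) unfolding noetherian_submodule_def by blast
  obtain G where G: "finite G" "\<And>r. \<exists>a. r - (\<Sum>g\<in>G. of_int (a g) * upow g) \<in> b_ideal \<Lambda>"
    using int_span_mod_b_ideal[OF assms(7)] by blast
  have "finite (quot L bL)" using finite_quot_bL[OF assms(8) F G] .
  then show ?thesis
    using card_quot_bM[OF assms(8)] ideal_x0_relations ideal_prod_subset_x0_relations
      x0_relations_subset by blast
qed

end
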